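(* Let $\mathcal N$ be a feed-forward ReLU network with input dimension $n_{\mathrm{in}}$ whose parameter vector $\theta$ is random with a distribution absolutely continuous with respect to Lebesgue measure on $\mathbb R^{\#\mathrm{params}}$, and let $k\ge0$. With probability $1$, for every $x\in X_{\mathcal N,k}(\theta)$ there exists $\varepsilon>0$ (depending on $x,\theta$) such that $X_{\mathcal N,k}(\theta)\cap B_\varepsilon(x)=P\cap B_\varepsilon(x)$ for an affine subspace $P\subset\mathbb R^{n_{\mathrm{in}}}$ of dimension $n_{\mathrm{in}}-k$.
   Context: A feed-forward ReLU network $\mathcal N$ with input dimension $n_{\mathrm{in}}$ has hidden layers $1,\dots,d$; edges only between consecutive layers (arbitrary connectivity, no tied weights). A neuron $z$ in layer $1$ has pre-activation $z(x;\theta)=\sum_i w_{z,i}x_i$; a neuron $z$ in layer $\ell\ge2$ has pre-activation $z(x;\theta)=\sum_{z'}w_{z,z'}\max\{0,z'(x;\theta)-b_{z'}\}$ over neurons $z'$ of layer $\ell-1$ joined to $z$; $b_z$ is its bias. $\theta$ is the vector of all weights and biases. $H_z(\theta)=\{x:z(x;\theta)=b_z\}$. $X_{\mathcal N,k}(\theta)$ is the set of $x\in\mathbb R^{n_{\mathrm{in}}}$ for which there are exactly $k$ neurons $z$ with $x\in H_z(\theta)$. $B_\varepsilon(x)$ is the open Euclidean ball of radius $\varepsilon$ about $x$. *)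

theory Defs
  imports "HOL-Probability.Probability"
begin

text \<open>Architecture: hidden layers 1..d, layer l has width l neurons; a neuron is a pair
 (layer, index). E z' z means neuron z' is joined to neuron z; only edges between consecutive
 layers are used.\<close>

type_synonym neuron = "nat \<times> nat"

datatype 'i param = Win neuron 'i | Wt neuron neuron | Bs neuron

definition neurons :: "nat \<Rightarrow> (nat \<Rightarrow> nat) \<Rightarrow> neuron set" where
  "neurons d width = {(l, j). 1 \<le> l \<and> l \<le> d \<and> j < width l}"

definition params :: "nat \<Rightarrow> (nat \<Rightarrow> nat) \<Rightarrow> (neuron \<Rightarrow> neuron \<Rightarrow> bool) \<Rightarrow> 'i param set" where
  "params d width E =
     {Win z i | z i. z \<in> neurons d width \<and> fst z = 1}
   \<union> {Wt z z' | z z'. z \<in> neurons d width \<and> z' \<in> neurons d width \<and> fst z' + 1 = fst z \<and> E z' z}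
   \<union> {Bs z | z. z \<in> neurons d width}"

fun preact :: "(nat \<Rightarrow> nat) \<Rightarrow> (neuron \<Rightarrow> neuron \<Rightarrow> bool) \<Rightarrow> ('n::finite param \<Rightarrow> real)
                 \<Rightarrow> real ^ 'n \<Rightarrow> nat \<Rightarrow> nat \<Rightarrow> real" where
  "preact width E \<theta> x 0 j = 0"
| "preact width E \<theta> x (Suc 0) j = (\<Sum>i\<in>UNIV. \<theta> (Win (1, j) i) * x $ i)"
| "preact width E \<theta> x (Suc (Suc l)) j =
     (\<Sum>j'\<in>{j'. j' < width (Suc l) \<and> E (Suc l, j') (Suc (Suc l), j)}.
        \<theta> (Wt (Suc (Suc l), j) (Suc l, j')) *
        max 0 (preact width E \<theta> x (Suc l) j' - \<theta> (Bs (Suc l, j'))))"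

definition Hz :: "(nat \<Rightarrow> nat) \<Rightarrow> (neuron \<Rightarrow> neuron \<Rightarrow> bool) \<Rightarrow> ('n::finite param \<Rightarrow> real)
                 \<Rightarrow> neuron \<Rightarrow> (real ^ 'n) set" where
  "Hz width E \<theta> z = {x. preact width E \<theta> x (fst z) (snd z) = \<theta> (Bs z)}"

definition Xk :: "nat \<Rightarrow> (nat \<Rightarrow> nat) \<Rightarrow> (neuron \<Rightarrow> neuron \<Rightarrow> bool) \<Rightarrow> ('n::finite param \<Rightarrow> real)
                 \<Rightarrow> nat \<Rightarrow> (real ^ 'n) set" where
  "Xk d width E \<theta> k = {x. card {z \<in> neurons d width. x \<in> Hz width E \<theta> z} = k}"

definition param_lebesgue :: "nat \<Rightarrow> (nat \<Rightarrow> nat) \<Rightarrow> (neuron \<Rightarrow> neuron \<Rightarrow> bool)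
                 \<Rightarrow> ('n::finite param \<Rightarrow> real) measure" where
  "param_lebesgue d width E = PiM (params d width E) (\<lambda>_. lborel)"

end

theory Submission
  imports Defs
begin

text \<open>Near a point \<open>x\<close> of \<open>X_k\<close> every neuron that does not vanish at \<open>x\<close> keeps its sign, so
  the network agrees with the affine network obtained by freezing its activation pattern at \<open>x\<close>,
  and \<open>X_k\<close> is cut out near \<open>x\<close> by the \<open>k\<close> frozen equations of the neurons vanishing at \<open>x\<close>.
  It remains to show that for almost every \<open>\<theta>\<close> every consistent system of frozen equations has
  independent coefficient vectors. Remove the neuron \<open>z\<close> of highest layer; by induction the
  other equations are independent. The bias of \<open>z\<close> enters no other equation and only shifts
  the equation of \<open>z\<close>, so for fixed values of the remaining parameters at most one value of it
  makes the system consistent but dependent, and Fubini's theorem makes the exceptional set null.\<close>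

lemma borel_measurable_PiM_lborel_component [measurable]:
  "(\<lambda>\<theta>. \<theta> p) \<in> borel_measurable (PiM I (\<lambda>_. lborel :: real measure))"
proof (cases "p \<in> I")
  case True
  then show ?thesis using measurable_component_singleton[of p I "\<lambda>_. lborel"] by simp
next
  case False
  have "(\<lambda>\<theta>. undefined) \<in> borel_measurable (PiM I (\<lambda>_. lborel :: real measure))" by simp
  then show ?thesis
    by (rule measurable_cong[THEN iffD1, rotated]) (auto simp: space_PiM PiE_arb[OF _ False])
qed

lemma emeasure_PiM_lborel_eq_0_if_coordinate_unique:
  fixes N :: "('a \<Rightarrow> real) set"
  assumes "finite I" "p \<in> I" and N: "N \<in> sets (PiM I (\<lambda>_. lborel))"
    and unique: "\<And>\<theta> b. \<theta> \<in> N \<Longrightarrow> \<theta>(p := b) \<in> N \<Longrightarrow> b = \<theta> p"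
  shows "emeasure (PiM I (\<lambda>_. lborel)) N = 0"
proof -
  interpret product_sigma_finite "\<lambda>_. lborel :: real measure"
    by (simp add: product_sigma_finite_def lborel.sigma_finite_measure_axioms)
  define J where "J = I - {p}"
  have I: "I = insert p J" "p \<notin> J" "finite J" using assms(1,2) by (auto simp: J_def)
  have line_null: "(\<integral>\<^sup>+ y. indicator N (x(p := y)) \<partial>lborel) = 0" for x
  proof (cases "\<exists>y0. x(p := y0) \<in> N")
    case False
    then show ?thesis by (simp add: indicator_def)
  next
    case True
    then obtain y0 where y0: "x(p := y0) \<in> N" by blast
    have "AE y in lborel. indicator N (x(p := y)) = (0::ennreal)"
      using AE_lborel_singleton[of y0]
    proof (rule eventually_mono)
      fix y :: real assume "y \<noteq> y0"
      then have "x(p := y) \<notin> N" using unique[OF y0, of y] by auto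
      then show "indicator N (x(p := y)) = (0::ennreal)" by simp
    qed
    from nn_integral_cong_AE[OF this] show ?thesis by simp
  qed
  have "emeasure (PiM I (\<lambda>_. lborel)) N = (\<integral>\<^sup>+ \<theta>. indicator N \<theta> \<partial>PiM I (\<lambda>_. lborel))"
    using N by simp
  also have "\<dots> = (\<integral>\<^sup>+ x. (\<integral>\<^sup>+ y. indicator N (x(p := y)) \<partial>lborel) \<partial>PiM J (\<lambda>_. lborel))"
    unfolding I(1) by (rule product_nn_integral_insert) (use I N in auto)
  also have "\<dots> = 0"
    by (simp add: line_null)
  finally show ?thesis .
qed

section \<open>Linear systems and spans\<close>

lemma span_solution_functional:
  fixes c :: "'i \<Rightarrow> 'a::real_inner" and e :: "'i \<Rightarrow> real"
  assumes solution: "\<forall>t\<in>T. c t \<bullet> y + e t = 0"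
    and "p \<in> span ((\<lambda>t. (c t, e t)) ` T)"
  shows "fst p \<bullet> y + snd p = 0"
proof -
  have "linear (\<lambda>p::'a \<times> real. fst p \<bullet> y + snd p)"
    by (simp add: linear_iff inner_add_left algebra_simps)
  then have "(\<lambda>p::'a \<times> real. fst p \<bullet> y + snd p) p = 0"
    by (rule real_vector.linear_eq_0_on_span[OF _ _ assms(2)]) (use solution in auto)
  then show ?thesis by simp
qed

lemma solvable_system_unit_notin_span:
  fixes c :: "'i \<Rightarrow> 'a::real_inner" and e :: "'i \<Rightarrow> real"
  assumes "\<forall>t\<in>T. c t \<bullet> y + e t = 0"
  shows "(0, 1) \<notin> span ((\<lambda>t. (c t, e t)) ` T)"
  using span_solution_functional[OF assms, of "(0, 1)"] by auto

lemma solvable_system_dependent_row_in_span: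
  fixes c :: "'i \<Rightarrow> 'a::euclidean_space" and e :: "'i \<Rightarrow> real"
  assumes "finite T" "z \<notin> T"
    and solution: "\<forall>t\<in>insert z T. c t \<bullet> y + e t = 0"
    and independent: "dim (c ` T) = card T"
    and dependent: "dim (c ` insert z T) \<noteq> card (insert z T)"
  shows "(c z, e z) \<in> span ((\<lambda>t. (c t, e t)) ` T)"
proof -
  let ?R = "(\<lambda>t. (c t, e t)) ` T"
  have "c z \<in> span (c ` T)"
  proof (rule ccontr)
    assume "c z \<notin> span (c ` T)"
    then have "dim (c ` insert z T) = dim (c ` T) + 1" by (simp add: dim_insert)
    with dependent independent assms(1,2) show False by simp
  qed
  moreover have "span (c ` T) = fst ` span ?R"
    using span_linear_image[OF linear_fst, of ?R] by (simp add: image_image)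
  ultimately obtain \<rho> where \<rho>: "\<rho> \<in> span ?R" "fst \<rho> = c z" by auto
  have "snd \<rho> = e z"
    using span_solution_functional[of T c y e \<rho>] solution \<rho> by auto
  with \<rho> show ?thesis by (metis prod.collapse)
qed

lemma linear_equations_solution_set:
  fixes c :: "'i \<Rightarrow> 'a::euclidean_space"
  assumes "\<forall>i\<in>S. c i \<bullet> x = g i"
  defines "P \<equiv> {y. \<forall>i\<in>S. c i \<bullet> y = g i}"
  shows "affine P" and "aff_dim P = int DIM('a) - int (dim (c ` S))"
proof -
  have "P = (\<Inter>i\<in>S. {y. c i \<bullet> y = g i})" by (auto simp: P_def)
  then show "affine P" by (auto intro!: affine_Inter simp: affine_hyperplane)
  define K where "K = {v \<in> UNIV. \<forall>a \<in> span (c ` S). orthogonal a v}"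
  have K: "v \<in> K \<longleftrightarrow> (\<forall>i\<in>S. c i \<bullet> v = 0)" for v
  proof
    assume "v \<in> K"
    then show "\<forall>i\<in>S. c i \<bullet> v = 0" by (auto simp: K_def orthogonal_def span_base)
  next
    assume "\<forall>i\<in>S. c i \<bullet> v = 0"
    then have "orthogonal v b" if "b \<in> c ` S" for b
      using that by (auto simp: orthogonal_def inner_commute)
    then have "orthogonal v a" if "a \<in> span (c ` S)" for a
      using orthogonal_to_span[OF that] by blast
    then show "v \<in> K" by (simp add: K_def orthogonal_commute)
  qed
  have "P = (+) x ` K"
  proof (intro set_eqI iffI)
    fix y assume "y \<in> P"
    then have "y - x \<in> K" using assms(1) by (auto simp: P_def K inner_diff_right)
    then show "y \<in> (+) x ` K" by (rule rev_image_eqI) simp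
  qed (use assms(1) in \<open>auto simp: P_def K inner_add_right\<close>)
  moreover have "subspace K"
    unfolding K_def using subspace_orthogonal_to_vectors by simp
  moreover have "dim K + dim (c ` S) = DIM('a)"
    using dim_subspace_orthogonal_to_vectors[of "span (c ` S)" UNIV]
    by (simp add: K_def subspace_span)
  ultimately show "aff_dim P = int DIM('a) - int (dim (c ` S))"
    by (simp add: aff_dim_translation_eq aff_dim_subspace)
qed

text \<open>Orthogonal projection onto \<open>span (v ` set ts)\<close> by Gram--Schmidt. It is an explicit formula,
  hence measurable when \<open>v\<close> and \<open>u\<close> depend measurably on a parameter; this makes membership in
  a span a measurable condition.\<close>

fun span_proj :: "('i \<Rightarrow> 'v::real_inner) \<Rightarrow> 'i list \<Rightarrow> 'v \<Rightarrow> 'v" where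
  "span_proj v [] u = 0"
| "span_proj v (t # ts) u =
    (let w = v t - span_proj v ts (v t)
     in span_proj v ts u + (if w = 0 then 0 else (inner u w / inner w w) *\<^sub>R w))"

lemma span_proj_in_span_orthogonal:
  "span_proj v ts u \<in> span (v ` set ts) \<and> (\<forall>a\<in>set ts. inner (u - span_proj v ts u) (v a) = 0)"
proof (induction ts arbitrary: u)
  case Nil
  then show ?case by simp
next
  case (Cons t ts)
  define p where "p = span_proj v ts u"
  define q where "q = span_proj v ts (v t)"
  define w where "w = v t - q"
  define \<alpha> where "\<alpha> = (if w = 0 then 0 else inner u w / inner w w)"
  have eq: "span_proj v (t # ts) u = p + \<alpha> *\<^sub>R w"
    by (simp add: p_def q_def w_def \<alpha>_def Let_def)
  have p: "p \<in> span (v ` set ts)" "\<forall>a\<in>set ts. inner (u - p) (v a) = 0"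
    using Cons.IH[of u] by (auto simp: p_def)
  have q: "q \<in> span (v ` set ts)" and w_orth: "\<forall>a\<in>set ts. inner w (v a) = 0"
    using Cons.IH[of "v t"] by (auto simp: q_def w_def)
  have orth_span: "inner r b = 0" if "b \<in> span (v ` set ts)" "\<forall>a\<in>set ts. inner r (v a) = 0" for r b
    using orthogonal_to_span[OF that(1), of r] that(2) by (auto simp: orthogonal_def)
  have sub: "span (v ` set ts) \<subseteq> span (v ` set (t # ts))" by (intro span_mono) auto
  have "v t \<in> span (v ` set (t # ts))" by (intro span_base) simp
  then have "w \<in> span (v ` set (t # ts))"
    unfolding w_def using q sub by (blast intro: span_diff)
  then have mem: "p + \<alpha> *\<^sub>R w \<in> span (v ` set (t # ts))"
    using p(1) sub by (blast intro: span_add span_scale)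
  have o1: "\<forall>a\<in>set ts. inner (u - (p + \<alpha> *\<^sub>R w)) (v a) = 0"
    using p(2) w_orth by (simp add: inner_diff_left inner_add_left)
  have "inner p w = 0"
    using orth_span[of p w] p(1) w_orth by (simp add: inner_commute)
  then have o2: "inner (u - (p + \<alpha> *\<^sub>R w)) w = 0"
    by (cases "w = 0") (simp_all add: \<alpha>_def inner_diff_left inner_add_left)
  have "inner (u - (p + \<alpha> *\<^sub>R w)) (w + q) = 0"
    using o2 orth_span[OF q o1] by (simp add: inner_add_right)
  then have "inner (u - (p + \<alpha> *\<^sub>R w)) (v t) = 0" by (simp add: w_def)
  then show ?case unfolding eq using mem o1 by simp
qed

lemma span_proj_eq_iff_in_span: "span_proj v ts u = u \<longleftrightarrow> u \<in> span (v ` set ts)"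
proof
  assume u: "u \<in> span (v ` set ts)"
  define r where "r = u - span_proj v ts u"
  have "r \<in> span (v ` set ts)"
    unfolding r_def using u span_proj_in_span_orthogonal[of v ts u] by (blast intro: span_diff)
  moreover have "\<forall>a\<in>set ts. inner r (v a) = 0"
    using span_proj_in_span_orthogonal[of v ts u] by (simp add: r_def)
  ultimately have "orthogonal r r"
    by (intro orthogonal_to_span[of r "v ` set ts" r]) (auto simp: orthogonal_def)
  then show "span_proj v ts u = u" by (simp add: r_def orthogonal_def)
next
  assume "span_proj v ts u = u"
  then show "u \<in> span (v ` set ts)" using span_proj_in_span_orthogonal[of v ts u] by simp
qed

lemma borel_measurable_span_proj [measurable]:
  fixes v :: "'i \<Rightarrow> 'a \<Rightarrow> 'v::euclidean_space"
  assumes [measurable]: "\<And>t. v t \<in> borel_measurable M" "u \<in> borel_measurable M"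
  shows "(\<lambda>x. span_proj (\<lambda>t. v t x) ts (u x)) \<in> borel_measurable M"
  using assms(2)
proof (induction ts arbitrary: u)
  case (Cons t ts)
  note [measurable] = Cons.IH[OF assms(1)] Cons.IH[OF Cons.prems] Cons.prems
  show ?case by (simp add: Let_def) measurable
qed simp

section \<open>The network with a frozen activation pattern\<close>

lemma finite_neurons: "finite (neurons d width)"
proof -
  have "neurons d width \<subseteq> (SIGMA l:{..d}. {..<width l})" by (auto simp: neurons_def)
  then show ?thesis by (rule finite_subset) auto
qed

lemma finite_params: "finite (params d width E :: 'i::finite param set)"
proof -
  have "params d width E \<subseteq> (\<lambda>(z, i). Win z i) ` (neurons d width \<times> UNIV)
      \<union> (\<lambda>(z, z'). Wt z z') ` (neurons d width \<times> neurons d width) \<union> Bs ` neurons d width"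
    by (auto simp: params_def)
  then show ?thesis by (rule finite_subset) (simp add: finite_neurons)
qed

lemma predecessor_in_neurons:
  "(Suc (Suc l), j) \<in> neurons d width \<Longrightarrow> j' < width (Suc l) \<Longrightarrow> (Suc l, j') \<in> neurons d width"
  by (auto simp: neurons_def)

lemma continuous_on_preact: "continuous_on UNIV (\<lambda>x. preact width E \<theta> x l j)"
proof (induction l arbitrary: j)
  case (Suc n)
  consider "n = 0" | m where "n = Suc m" by (cases n) auto
  then show ?case
  proof cases
    case (2 m)
    then have "continuous_on UNIV (\<lambda>x. preact width E \<theta> x (Suc m) j')" for j'
      using Suc.IH by simp
    then show ?thesis unfolding \<open>n = Suc m\<close> preact.simps by (intro continuous_intros)
  qed (simp add: continuous_intros)
qed simp

text \<open>The network with its activation pattern frozen to \<open>A\<close>: a neuron in \<open>A\<close> passes on its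
  pre-activation minus its bias, any other neuron outputs \<open>0\<close>. Its pre-activations are affine in
  the input; near a point \<open>x\<close> they agree with \<open>preact\<close> when \<open>A\<close> is the set of neurons strictly
  active at \<open>x\<close>.\<close>

fun frozen_coeff :: "(nat \<Rightarrow> nat) \<Rightarrow> (neuron \<Rightarrow> neuron \<Rightarrow> bool) \<Rightarrow> neuron set
    \<Rightarrow> ('n::finite param \<Rightarrow> real) \<Rightarrow> nat \<Rightarrow> nat \<Rightarrow> real ^ 'n" where
  "frozen_coeff width E A \<theta> 0 j = 0"
| "frozen_coeff width E A \<theta> (Suc 0) j = (\<Sum>i\<in>UNIV. \<theta> (Win (1, j) i) *\<^sub>R axis i 1)"
| "frozen_coeff width E A \<theta> (Suc (Suc l)) j =
     (\<Sum>j'\<in>{j'. j' < width (Suc l) \<and> E (Suc l, j') (Suc (Suc l), j)}.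
        \<theta> (Wt (Suc (Suc l), j) (Suc l, j')) *\<^sub>R
        (if (Suc l, j') \<in> A then frozen_coeff width E A \<theta> (Suc l) j' else 0))"

fun frozen_offset :: "(nat \<Rightarrow> nat) \<Rightarrow> (neuron \<Rightarrow> neuron \<Rightarrow> bool) \<Rightarrow> neuron set
    \<Rightarrow> ('n::finite param \<Rightarrow> real) \<Rightarrow> nat \<Rightarrow> nat \<Rightarrow> real" where
  "frozen_offset width E A \<theta> 0 j = 0"
| "frozen_offset width E A \<theta> (Suc 0) j = 0"
| "frozen_offset width E A \<theta> (Suc (Suc l)) j =
     (\<Sum>j'\<in>{j'. j' < width (Suc l) \<and> E (Suc l, j') (Suc (Suc l), j)}.
        \<theta> (Wt (Suc (Suc l), j) (Suc l, j')) *
        (if (Suc l, j') \<in> A then frozen_offset width E A \<theta> (Suc l) j' - \<theta> (Bs (Suc l, j')) else 0))"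

definition frozen_preact :: "(nat \<Rightarrow> nat) \<Rightarrow> (neuron \<Rightarrow> neuron \<Rightarrow> bool) \<Rightarrow> neuron set
    \<Rightarrow> ('n::finite param \<Rightarrow> real) \<Rightarrow> real ^ 'n \<Rightarrow> nat \<Rightarrow> nat \<Rightarrow> real" where
  "frozen_preact width E A \<theta> y l j = frozen_coeff width E A \<theta> l j \<bullet> y + frozen_offset width E A \<theta> l j"

lemma frozen_preact_simps:
  "frozen_preact width E A \<theta> y 0 j = 0"
  "frozen_preact width E A \<theta> y (Suc 0) j = (\<Sum>i\<in>UNIV. \<theta> (Win (1, j) i) * y $ i)"
  "frozen_preact width E A \<theta> y (Suc (Suc l)) j =
     (\<Sum>j'\<in>{j'. j' < width (Suc l) \<and> E (Suc l, j') (Suc (Suc l), j)}.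
        \<theta> (Wt (Suc (Suc l), j) (Suc l, j')) *
        (if (Suc l, j') \<in> A then frozen_preact width E A \<theta> y (Suc l) j' - \<theta> (Bs (Suc l, j')) else 0))"
  by (simp_all add: frozen_preact_def inner_sum_left inner_axis inner_axis' sum.distrib[symmetric]
      algebra_simps if_distrib cong: sum.cong if_cong)

lemma preact_eq_frozen_preact:
  fixes \<theta> :: "'n::finite param \<Rightarrow> real" and x y :: "real ^ 'n"
    and d :: nat and width :: "nat \<Rightarrow> nat" and E :: "neuron \<Rightarrow> neuron \<Rightarrow> bool"
  defines "A \<equiv> {z \<in> neurons d width. \<theta> (Bs z) < preact width E \<theta> x (fst z) (snd z)}"
  assumes pos: "\<And>z. z \<in> neurons d width \<Longrightarrow> \<theta> (Bs z) < preact width E \<theta> x (fst z) (snd z) \<Longrightarrow>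
      \<theta> (Bs z) < preact width E \<theta> y (fst z) (snd z)"
    and neg: "\<And>z. z \<in> neurons d width \<Longrightarrow> preact width E \<theta> x (fst z) (snd z) < \<theta> (Bs z) \<Longrightarrow>
      preact width E \<theta> y (fst z) (snd z) < \<theta> (Bs z)"
    and zero: "\<And>z. z \<in> neurons d width \<Longrightarrow> preact width E \<theta> x (fst z) (snd z) = \<theta> (Bs z) \<Longrightarrow>
      preact width E \<theta> y (fst z) (snd z) = \<theta> (Bs z) \<or>
      frozen_preact width E A \<theta> y (fst z) (snd z) = \<theta> (Bs z)"
  shows "(l, j) \<in> neurons d width \<Longrightarrow> preact width E \<theta> y l j = frozen_preact width E A \<theta> y l j"
proof (induction l arbitrary: j)
  case 0
  then show ?case by (simp add: frozen_preact_simps)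
next
  case (Suc n)
  show ?case
  proof (cases n)
    case 0
    then show ?thesis by (simp add: frozen_preact_simps)
  next
    case (Suc l)
    have "\<theta> (Wt (Suc (Suc l), j) (Suc l, j')) *
            max 0 (preact width E \<theta> y (Suc l) j' - \<theta> (Bs (Suc l, j'))) =
          \<theta> (Wt (Suc (Suc l), j) (Suc l, j')) *
            (if (Suc l, j') \<in> A then frozen_preact width E A \<theta> y (Suc l) j' - \<theta> (Bs (Suc l, j'))
             else 0)"
      if "j' < width (Suc l)" for j'
    proof -
      define z where "z = (Suc l, j')"
      have zN: "z \<in> neurons d width"
        using predecessor_in_neurons Suc.prems \<open>n = Suc l\<close> that by (simp add: z_def)
      have IH: "preact width E \<theta> y (Suc l) j' = frozen_preact width E A \<theta> y (Suc l) j'"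
        using Suc.IH zN \<open>n = Suc l\<close> by (simp add: z_def)
      consider "\<theta> (Bs z) < preact width E \<theta> x (Suc l) j'"
        | "preact width E \<theta> x (Suc l) j' < \<theta> (Bs z)"
        | "preact width E \<theta> x (Suc l) j' = \<theta> (Bs z)"
        by linarith
      then show ?thesis
        using pos[OF zN] neg[OF zN] zero[OF zN] IH zN by cases (auto simp: A_def z_def)
    qed
    then show ?thesis
      unfolding Suc frozen_preact_simps preact.simps by (intro sum.cong) auto
  qed
qed

lemma eventually_nhds_strict_signs:
  fixes f :: "'z \<Rightarrow> 'a::t2_space \<Rightarrow> real"
  assumes "finite Z" and cont: "\<And>z. z \<in> Z \<Longrightarrow> isCont (f z) x"
  shows "eventually (\<lambda>y. \<forall>z\<in>Z. (b z < f z x \<longrightarrow> b z < f z y) \<and> (f z x < b z \<longrightarrow> f z y < b z))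
    (nhds x)"
proof (rule eventually_ball_finite[OF \<open>finite Z\<close>], intro ballI eventually_conj)
  fix z assume "z \<in> Z"
  then have lim: "(f z \<longlongrightarrow> f z x) (nhds x)"
    using cont tendsto_at_iff_tendsto_nhds isCont_def by blast
  show "eventually (\<lambda>y. b z < f z x \<longrightarrow> b z < f z y) (nhds x)"
    using order_tendstoD(1)[OF lim] by (cases "b z < f z x") auto
  show "eventually (\<lambda>y. f z x < b z \<longrightarrow> f z y < b z) (nhds x)"
    using order_tendstoD(2)[OF lim] by (cases "f z x < b z") auto
qed

text \<open>Near a point of \<open>Xk\<close> no new neuron can vanish, so staying in \<open>Xk\<close> means keeping all
  neurons of \<open>S\<close> at their bias; on that set the network coincides with its frozen version.\<close>

lemma Xk_near_point_iff_frozen_equations: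
  fixes \<theta> :: "'n::finite param \<Rightarrow> real" and x :: "real ^ 'n"
    and d :: nat and width :: "nat \<Rightarrow> nat" and E :: "neuron \<Rightarrow> neuron \<Rightarrow> bool"
  assumes "x \<in> Xk d width E \<theta> k"
  defines "S \<equiv> {z \<in> neurons d width. x \<in> Hz width E \<theta> z}"
    and "A \<equiv> {z \<in> neurons d width. \<theta> (Bs z) < preact width E \<theta> x (fst z) (snd z)}"
  shows "\<exists>\<epsilon>>0. \<forall>y\<in>ball x \<epsilon>. y \<in> Xk d width E \<theta> k \<longleftrightarrow>
           (\<forall>z\<in>S. frozen_preact width E A \<theta> y (fst z) (snd z) = \<theta> (Bs z))"
proof -
  let ?f = "\<lambda>z y. preact width E \<theta> y (fst z) (snd z)"
  have "eventually (\<lambda>y. \<forall>z\<in>neurons d width. (\<theta> (Bs z) < ?f z x \<longrightarrow> \<theta> (Bs z) < ?f z y) \<and>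
      (?f z x < \<theta> (Bs z) \<longrightarrow> ?f z y < \<theta> (Bs z))) (nhds x)"
    using continuous_on_preact[of width E \<theta>] by (intro eventually_nhds_strict_signs finite_neurons)
      (auto simp: continuous_on_eq_continuous_at)
  then obtain \<epsilon> where "\<epsilon> > 0" and signs: "\<And>y. dist y x < \<epsilon> \<Longrightarrow> \<forall>z\<in>neurons d width.
      (\<theta> (Bs z) < ?f z x \<longrightarrow> \<theta> (Bs z) < ?f z y) \<and> (?f z x < \<theta> (Bs z) \<longrightarrow> ?f z y < \<theta> (Bs z))"
    unfolding eventually_nhds_metric by blast
  have "y \<in> Xk d width E \<theta> k \<longleftrightarrow> (\<forall>z\<in>S. frozen_preact width E A \<theta> y (fst z) (snd z) = \<theta> (Bs z))"
    if "y \<in> ball x \<epsilon>" for y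
  proof -
    have signs_y: "\<forall>z\<in>neurons d width. (\<theta> (Bs z) < ?f z x \<longrightarrow> \<theta> (Bs z) < ?f z y) \<and>
        (?f z x < \<theta> (Bs z) \<longrightarrow> ?f z y < \<theta> (Bs z))"
      using signs that by (simp add: dist_commute)
    have S: "S = {z \<in> neurons d width. ?f z x = \<theta> (Bs z)}" by (simp add: S_def Hz_def)
    define Sy where "Sy = {z \<in> neurons d width. y \<in> Hz width E \<theta> z}"
    have sub: "Sy \<subseteq> S"
      using signs_y by (auto simp: S Sy_def Hz_def)
    have "finite S" using finite_neurons by (simp add: S_def)
    moreover have "card S = k" using assms(1) by (simp add: Xk_def S_def)
    moreover have "y \<in> Xk d width E \<theta> k \<longleftrightarrow> card Sy = k" by (simp add: Xk_def Sy_def)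
    ultimately have "y \<in> Xk d width E \<theta> k \<longleftrightarrow> S \<subseteq> Sy"
      using card_subset_eq[OF _ sub] sub by auto
    then have Xk_iff: "y \<in> Xk d width E \<theta> k \<longleftrightarrow> (\<forall>z\<in>S. ?f z y = \<theta> (Bs z))"
      by (auto simp: S Sy_def Hz_def)
    have same: "?f z y = frozen_preact width E A \<theta> y (fst z) (snd z)"
      if "z \<in> S" and zero: "\<forall>z\<in>S. ?f z y = \<theta> (Bs z) \<or>
            frozen_preact width E A \<theta> y (fst z) (snd z) = \<theta> (Bs z)" for z
      by (rule preact_eq_frozen_preact[of d width \<theta> E x y "fst z" "snd z", folded A_def])
        (use signs_y zero that in \<open>force simp: S\<close>)+
    show ?thesis
      unfolding Xk_iff using same by (metis (no_types, lifting))
  qed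
  with \<open>\<epsilon> > 0\<close> show ?thesis by blast
qed

section \<open>Genericity of the frozen equations\<close>

definition frozen_row :: "(nat \<Rightarrow> nat) \<Rightarrow> (neuron \<Rightarrow> neuron \<Rightarrow> bool) \<Rightarrow> neuron set
    \<Rightarrow> ('n::finite param \<Rightarrow> real) \<Rightarrow> neuron \<Rightarrow> (real ^ 'n) \<times> real" where
  "frozen_row width E A \<theta> z =
     (frozen_coeff width E A \<theta> (fst z) (snd z), frozen_offset width E A \<theta> (fst z) (snd z) - \<theta> (Bs z))"

lemma frozen_preact_eq_bias_iff:
  "frozen_preact width E A \<theta> y (fst z) (snd z) = \<theta> (Bs z) \<longleftrightarrow>
   fst (frozen_row width E A \<theta> z) \<bullet> y + snd (frozen_row width E A \<theta> z) = 0"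
  by (auto simp: frozen_row_def frozen_preact_def inner_commute)

definition frozen_transversal :: "(nat \<Rightarrow> nat) \<Rightarrow> (neuron \<Rightarrow> neuron \<Rightarrow> bool) \<Rightarrow> neuron set
    \<Rightarrow> neuron set \<Rightarrow> ('n::finite param \<Rightarrow> real) \<Rightarrow> bool" where
  "frozen_transversal width E A S \<theta> \<longleftrightarrow>
     (\<exists>y. \<forall>z\<in>S. frozen_preact width E A \<theta> y (fst z) (snd z) = \<theta> (Bs z)) \<longrightarrow>
     dim ((\<lambda>z. fst (frozen_row width E A \<theta> z)) ` S) = card S"

lemma borel_measurable_frozen_coeff [measurable]:
  "(\<lambda>\<theta>. frozen_coeff width E A \<theta> l j) \<in> borel_measurable (PiM I (\<lambda>_. lborel))"
proof (induction l arbitrary: j)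
  case (Suc n)
  then show ?case by (cases n) simp_all
qed simp

lemma borel_measurable_frozen_offset [measurable]:
  "(\<lambda>\<theta>. frozen_offset width E A \<theta> l j) \<in> borel_measurable (PiM I (\<lambda>_. lborel))"
proof (induction l arbitrary: j)
  case (Suc n)
  then show ?case by (cases n) simp_all
qed simp

lemma borel_measurable_frozen_row [measurable]:
  "(\<lambda>\<theta>. frozen_row width E A \<theta> z) \<in> borel_measurable (PiM I (\<lambda>_. lborel))"
  unfolding frozen_row_def by measurable

lemma frozen_coeff_upd_bias:
  "frozen_coeff width E A (\<theta>(Bs z := b)) l j = frozen_coeff width E A \<theta> l j"
  by (induction width E A \<theta> l j rule: frozen_coeff.induct) (auto intro!: sum.cong)

lemma frozen_offset_upd_bias:
  "l \<le> fst z \<Longrightarrow> frozen_offset width E A (\<theta>(Bs z := b)) l j = frozen_offset width E A \<theta> l j"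
  by (induction width E A \<theta> l j rule: frozen_offset.induct) (auto intro!: sum.cong)

text \<open>The bias of a neuron \<open>z\<close> of maximal layer moves only the equation of \<open>z\<close>, and that one in the
  direction \<open>(0, 1)\<close>; so for each choice of the remaining parameters at most one value of the bias
  makes the row of \<open>z\<close> a consistent combination of the others.\<close>

lemma null_sets_frozen_row_in_span:
  assumes "z \<in> neurons d width" "z \<notin> T" "finite T" and below: "\<And>t. t \<in> T \<Longrightarrow> fst t \<le> fst z"
  shows "{\<theta> \<in> space (param_lebesgue d width E).
            frozen_row width E A \<theta> z \<in> span (frozen_row width E A \<theta> ` T) \<and>
            (0, 1) \<notin> span (frozen_row width E A \<theta> ` T)} \<in> null_sets (param_lebesgue d width E)"
    (is "?N \<in> null_sets ?L")
proof -
  let ?R = "frozen_row width E A"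
  obtain ts where ts: "set ts = T" using finite_list[OF \<open>finite T\<close>] by blast
  have "?N = {\<theta> \<in> space ?L. span_proj (?R \<theta>) ts (?R \<theta> z) = ?R \<theta> z \<and>
      span_proj (?R \<theta>) ts (0, 1) \<noteq> (0, 1)}"
    by (simp add: span_proj_eq_iff_in_span ts)
  also have "\<dots> \<in> sets ?L"
  proof -
    have proj_z: "(\<lambda>\<theta>. span_proj (?R \<theta>) ts (?R \<theta> z)) \<in> borel_measurable ?L"
      and proj_unit: "(\<lambda>\<theta>. span_proj (?R \<theta>) ts (0, 1)) \<in> borel_measurable ?L"
      and proj_row: "(\<lambda>\<theta>. ?R \<theta> z) \<in> borel_measurable ?L"
      unfolding param_lebesgue_def by (rule borel_measurable_span_proj; simp)+ simp
    have "{\<theta> \<in> space ?L. span_proj (?R \<theta>) ts (?R \<theta> z) = ?R \<theta> z} \<in> sets ?L"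
      using proj_z proj_row by measurable
    moreover have "{\<theta> \<in> space ?L. span_proj (?R \<theta>) ts (0, 1) = (0, 1)} \<in> sets ?L"
      using proj_unit by measurable
    ultimately show ?thesis
      by (auto elim!: back_subst[of "\<lambda>X. X \<in> sets ?L"] intro: sets.Diff sets.Int)
  qed
  finally have N: "?N \<in> sets ?L" .
  have rows: "?R (\<theta>(Bs z := b)) t = ?R \<theta> t" if "t \<in> T" for \<theta> b t
    using that below \<open>z \<notin> T\<close>
    by (auto simp: frozen_row_def frozen_coeff_upd_bias frozen_offset_upd_bias)
  have row_z: "?R \<theta> z - ?R (\<theta>(Bs z := b)) z = (b - \<theta> (Bs z)) *\<^sub>R (0, 1)" for \<theta> b
    by (simp add: frozen_row_def frozen_coeff_upd_bias frozen_offset_upd_bias)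
  have "b = \<theta> (Bs z)" if "\<theta> \<in> ?N" "\<theta>(Bs z := b) \<in> ?N" for \<theta> b
  proof (rule ccontr)
    assume "b \<noteq> \<theta> (Bs z)"
    have "?R (\<theta>(Bs z := b)) ` T = ?R \<theta> ` T" by (rule image_cong) (simp_all add: rows)
    then have "(b - \<theta> (Bs z)) *\<^sub>R (0, 1) \<in> span (?R \<theta> ` T)"
      using that unfolding row_z[symmetric] by (auto intro: span_diff)
    then have "inverse (b - \<theta> (Bs z)) *\<^sub>R (b - \<theta> (Bs z)) *\<^sub>R (0, 1)
        \<in> span (?R \<theta> ` T)"
      by (rule span_scale)
    with \<open>b \<noteq> \<theta> (Bs z)\<close> that show False by simp
  qed
  moreover have "Bs z \<in> params d width E" using assms(1) by (cases z) (simp add: params_def)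
  ultimately have "emeasure ?L ?N = 0"
    unfolding param_lebesgue_def
    by (intro emeasure_PiM_lborel_eq_0_if_coordinate_unique[OF finite_params])
      (use N in \<open>auto simp: param_lebesgue_def\<close>)
  with N show ?thesis by (simp add: null_sets_def)
qed

lemma frozen_transversal_except_null_set:
  assumes "S \<subseteq> neurons d width"
  shows "\<exists>N\<in>null_sets (param_lebesgue d width E). {\<theta> \<in> space (param_lebesgue d width E).
           \<not> frozen_transversal width E A S (\<theta> :: 'n::finite param \<Rightarrow> real)} \<subseteq> N"
  using assms
proof (induction "card S" arbitrary: S rule: less_induct)
  case less
  let ?L = "param_lebesgue d width E :: ('n param \<Rightarrow> real) measure"
  let ?R = "frozen_row width E A"
  have "finite S" using less.prems finite_neurons finite_subset by blast
  show ?case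
  proof (cases "S = {}")
    case True
    then show ?thesis by (auto simp: frozen_transversal_def)
  next
    case False
    have "Max (fst ` S) \<in> fst ` S" using \<open>finite S\<close> False by (intro Max_in) auto
    then obtain z where z: "z \<in> S" "fst z = Max (fst ` S)" by (metis imageE)
    define T where "T = S - {z}"
    have S: "S = insert z T" "z \<notin> T" "finite T" "T \<subseteq> neurons d width"
      using z \<open>finite S\<close> less.prems by (auto simp: T_def)
    have below: "fst t \<le> fst z" if "t \<in> T" for t
      using that z \<open>finite S\<close> by (simp add: T_def)
    obtain N1 where N1: "N1 \<in> null_sets ?L" "{\<theta> \<in> space ?L. \<not> frozen_transversal width E A T \<theta>} \<subseteq> N1"
      using less.hyps[OF _ S(4)] S(1-3) by (metis card_insert_disjoint lessI)
    define N2 where "N2 = {\<theta> \<in> space ?L. ?R \<theta> z \<in> span (?R \<theta> ` T) \<and> (0, 1) \<notin> span (?R \<theta> ` T)}"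
    have N2: "N2 \<in> null_sets ?L"
      unfolding N2_def using z S less.prems by (intro null_sets_frozen_row_in_span below) auto
    have "\<theta> \<in> N1 \<union> N2" if "\<theta> \<in> space ?L" "\<not> frozen_transversal width E A S \<theta>" for \<theta>
    proof (cases "frozen_transversal width E A T \<theta>")
      case True
      from that(2) obtain y where
        y: "\<forall>t\<in>insert z T. fst (?R \<theta> t) \<bullet> y + snd (?R \<theta> t) = 0"
        and dependent: "dim ((\<lambda>t. fst (?R \<theta> t)) ` insert z T) \<noteq> card (insert z T)"
        unfolding frozen_transversal_def S(1) frozen_preact_eq_bias_iff by blast
      have "dim ((\<lambda>t. fst (?R \<theta> t)) ` T) = card T"
        using True y unfolding frozen_transversal_def frozen_preact_eq_bias_iff by blast
      then have "?R \<theta> z \<in> span (?R \<theta> ` T)"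
        using solvable_system_dependent_row_in_span[OF S(3,2) y _ dependent] by simp
      moreover have "(0, 1) \<notin> span (?R \<theta> ` T)"
        using solvable_system_unit_notin_span[of T "\<lambda>t. fst (?R \<theta> t)" y "\<lambda>t. snd (?R \<theta> t)"] y
        by simp
      ultimately show ?thesis using that(1) by (simp add: N2_def)
    qed (use N1 that in auto)
    then show ?thesis using N1 N2 by (intro bexI[of _ "N1 \<union> N2"]) auto
  qed
qed

lemma AE_frozen_transversal:
  fixes \<mu> :: "('n::finite param \<Rightarrow> real) measure"
  assumes "sets \<mu> = sets (param_lebesgue d width E)"
    and "absolutely_continuous (param_lebesgue d width E) \<mu>"
  shows "AE \<theta> in \<mu>. \<forall>A\<in>Pow (neurons d width). \<forall>S\<in>Pow (neurons d width).
           frozen_transversal width E A S \<theta>"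
proof -
  have fin: "finite (Pow (neurons d width))" by (simp add: finite_neurons)
  have space: "space \<mu> = space (param_lebesgue d width E)" using assms(1) by (rule sets_eq_imp_space_eq)
  show ?thesis
  proof (rule AE_finite_allI[OF fin], rule AE_finite_allI[OF fin])
    fix A S assume "A \<in> Pow (neurons d width)" "S \<in> Pow (neurons d width)"
    then have "\<exists>N\<in>null_sets (param_lebesgue d width E). {\<theta> \<in> space (param_lebesgue d width E).
        \<not> frozen_transversal width E A S (\<theta> :: 'n param \<Rightarrow> real)} \<subseteq> N"
      by (intro frozen_transversal_except_null_set) simp
    then obtain N :: "('n param \<Rightarrow> real) set" where N: "N \<in> null_sets (param_lebesgue d width E)"
      "{\<theta> \<in> space (param_lebesgue d width E). \<not> frozen_transversal width E A S \<theta>} \<subseteq> N"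
      by blast
    from N(1) have "N \<in> null_sets \<mu>" using assms(2) by (auto simp: absolutely_continuous_def)
    then show "AE \<theta> in \<mu>. frozen_transversal width E A S \<theta>"
      by (rule AE_I') (use N(2) space in blast)
  qed
qed

lemma Xk_locally_affine:
  fixes \<theta> :: "'n::finite param \<Rightarrow> real"
  assumes transversal: "\<forall>A\<in>Pow (neurons d width). \<forall>S\<in>Pow (neurons d width).
      frozen_transversal width E A S \<theta>"
    and x: "x \<in> Xk d width E \<theta> k"
  shows "\<exists>\<epsilon>>0. \<exists>P. affine P \<and> aff_dim P = int CARD('n) - int k \<and>
           Xk d width E \<theta> k \<inter> ball x \<epsilon> = P \<inter> ball x \<epsilon>"
proof -
  define S where "S = {z \<in> neurons d width. x \<in> Hz width E \<theta> z}"
  define A where "A = {z \<in> neurons d width. \<theta> (Bs z) < preact width E \<theta> x (fst z) (snd z)}"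
  define c where "c = (\<lambda>z. fst (frozen_row width E A \<theta> z))"
  define P where "P = {y. \<forall>z\<in>S. c z \<bullet> y = - snd (frozen_row width E A \<theta> z)}"
  obtain \<epsilon> where "\<epsilon> > 0" and near: "\<forall>y\<in>ball x \<epsilon>. y \<in> Xk d width E \<theta> k \<longleftrightarrow> y \<in> P"
    using Xk_near_point_iff_frozen_equations[OF x]
    by (auto simp: S_def A_def P_def c_def frozen_preact_eq_bias_iff eq_neg_iff_add_eq_0)
  then have "x \<in> P" using x \<open>\<epsilon> > 0\<close> by auto
  then have "affine P" "aff_dim P = int CARD('n) - int (dim (c ` S))"
    unfolding P_def by (auto dest: linear_equations_solution_set)
  moreover have "dim (c ` S) = k"
  proof -
    have "frozen_transversal width E A S \<theta>" using transversal by (simp add: S_def A_def)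
    moreover have "card S = k" using x by (simp add: Xk_def S_def)
    ultimately show ?thesis
      using \<open>x \<in> P\<close> by (auto simp: frozen_transversal_def frozen_preact_eq_bias_iff P_def c_def
        eq_neg_iff_add_eq_0)
  qed
  ultimately show ?thesis
    using \<open>\<epsilon> > 0\<close> near by (intro exI[of _ \<epsilon>] exI[of _ P]) auto
qed

theorem mainTheorem12:
  fixes d :: nat and width :: "nat \<Rightarrow> nat" and E :: "neuron \<Rightarrow> neuron \<Rightarrow> bool"
    and k :: nat and \<mu> :: "('n::finite param \<Rightarrow> real) measure"
  assumes "prob_space \<mu>"
    and "sets \<mu> = sets (param_lebesgue d width E)"
    and "absolutely_continuous (param_lebesgue d width E) \<mu>"
  shows "AE \<theta> in \<mu>. \<forall>x \<in> Xk d width E \<theta> k. \<exists>\<epsilon>>0. \<exists>P.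
           affine P \<and> aff_dim P = int CARD('n) - int k \<and>
           Xk d width E \<theta> k \<inter> ball x \<epsilon> = P \<inter> ball x \<epsilon>"
proof -
  have "AE \<theta> in \<mu>. \<forall>A\<in>Pow (neurons d width). \<forall>S\<in>Pow (neurons d width).
          frozen_transversal width E A S \<theta>"
    using assms(2,3) by (rule AE_frozen_transversal)
  then show ?thesis
    by (rule eventually_mono) (rule ballI, erule Xk_locally_affine, assumption)
qed

end
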